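(* Let $S:=K_T(\mathrm{pt})[X_1^{(1)},Y_1^{(1)},e_1(X^{(2)}),e_2(X^{(2)}),Y_1^{(2)}]$ be a polynomial ring in five independent indeterminates over $K_T(\mathrm{pt})=\mathbb Z[T_1^{\pm1},T_2^{\pm1},T_3^{\pm1}]$, and write $e_i(T)$ for the elementary symmetric polynomials in $T_1,T_2,T_3$. Let $I_q^{\mathrm{poly}}\subset S[q_1,q_2]$ be the ideal generated by $X_1^{(1)}+Y_1^{(1)}-e_1(X^{(2)})$, $X_1^{(1)}Y_1^{(1)}-(1-q_1)e_2(X^{(2)})$, $(1-q_2)\big(e_1(X^{(2)})+Y_1^{(2)}-e_1(T)\big)$, $\big(e_1(X^{(2)})-q_2X_1^{(1)}\big)Y_1^{(2)}-(1-q_2)\big(e_2(T)-e_2(X^{(2)})\big)$, $e_2(X^{(2)})Y_1^{(2)}-(1-q_2)e_3(T)$, and let $I_q\subset S[\![q_1,q_2]\!]$ be the ideal generated by the same five elements. Then the natural ring homomorphism $\Phi^{\mathrm{poly}}:S[q_1,q_2]/I_q^{\mathrm{poly}}\to S[\![q_1,q_2]\!]/I_q$ is not injective: the class of $e_1(X^{(2)})+Y_1^{(2)}-e_1(T)$ is nonzero in $S[q_1,q_2]/I_q^{\mathrm{poly}}$ but lies in the kernel of $\Phi^{\mathrm{poly}}$. *)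

theory Defs
  imports "HOL-Library.Poly_Mapping" "HOL-Library.Product_Plus"
          "HOL-Computational_Algebra.Polynomial" "HOL-Computational_Algebra.Polynomial_FPS"
begin

text \<open>K_T(pt) = Z[T1^{+-1},T2^{+-1},T3^{+-1}]: the group ring of Z^3 over Z,
  i.e. finitely supported functions from exponent vectors in Z^3 to Z.\<close>
type_synonym KT = "(int \<times> int \<times> int) \<Rightarrow>\<^sub>0 int"

text \<open>S = K_T(pt)[X1, Y1, E1, E2, Y2] as iterated univariate polynomial rings
  (innermost variable X1, then Y1, E1 = e_1(X^(2)), E2 = e_2(X^(2)), outermost Y2).\<close>
type_synonym S = "KT poly poly poly poly poly"

text \<open>S[q1,q2] (q1 inner, q2 outer) and S[[q1,q2]] = S[[q1]][[q2]].\<close>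
type_synonym Sq = "S poly poly"
type_synonym Sqq = "S fps fps"

definition T1 :: KT where "T1 = Poly_Mapping.single (1,0,0) 1"
definition T2 :: KT where "T2 = Poly_Mapping.single (0,1,0) 1"
definition T3 :: KT where "T3 = Poly_Mapping.single (0,0,1) 1"

definition e1T :: KT where "e1T = T1 + T2 + T3"
definition e2T :: KT where "e2T = T1 * T2 + T1 * T3 + T2 * T3"
definition e3T :: KT where "e3T = T1 * T2 * T3"

definition KtoS :: "KT \<Rightarrow> S" where "KtoS c = [:[:[:[:[:c:]:]:]:]:]"
definition StoSq :: "S \<Rightarrow> Sq" where "StoSq s = [:[:s:]:]"

definition X1 :: S where "X1 = [:[:[:[:[:0, 1:]:]:]:]:]"
definition Y1 :: S where "Y1 = [:[:[:[:0, 1:]:]:]:]"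
definition E1 :: S where "E1 = [:[:[:0, 1:]:]:]"
definition E2 :: S where "E2 = [:[:0, 1:]:]"
definition Y2 :: S where "Y2 = [:0, 1:]"

definition q1 :: Sq where "q1 = [:[:0, 1:]:]"
definition q2 :: Sq where "q2 = [:0, 1:]"

definition gens :: "Sq list" where
  "gens =
    [ StoSq (X1 + Y1 - E1),
      StoSq (X1 * Y1) - (1 - q1) * StoSq E2,
      (1 - q2) * StoSq (E1 + Y2 - KtoS e1T),
      (StoSq E1 - q2 * StoSq X1) * StoSq Y2 - (1 - q2) * StoSq (KtoS e2T - E2),
      StoSq (E2 * Y2) - (1 - q2) * StoSq (KtoS e3T) ]"

definition gen_ideal :: "'a::comm_ring_1 list \<Rightarrow> 'a set" where
  "gen_ideal gs = {x. \<exists>c. x = (\<Sum>i<length gs. c i * gs ! i)}"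

definition Phi :: "Sq \<Rightarrow> Sqq" where
  "Phi p = fps_of_poly (map_poly fps_of_poly p)"

end

theory Submission
  imports Defs
begin

text \<open>Specialising q2 to 1 kills the generator (1 - q2)(e1(X) + Y2 - e1(T)) and leaves a system
  with the common zero q1 = 0, X1 = Y1 = E1 = E2 = Y2 = 0, at which e1(X) + Y2 - e1(T) takes the
  value -e1(T) \<noteq> 0; so this element is not in I_q^poly. In S[[q1,q2]], on the other hand,
  1 - q2 is a unit, so the same generator shows that its image lies in I_q.\<close>

lemma gen_ideal_member: "g \<in> set gs \<Longrightarrow> g \<in> gen_ideal gs"
proof -
  assume "g \<in> set gs"
  then obtain i where i: "i < length gs" "gs ! i = g" by (auto simp: in_set_conv_nth)
  have "(\<Sum>j<length gs. (if j = i then 1 else 0) * gs ! j) = g"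
    using i by (simp add: if_distrib[of "\<lambda>c. c * _"] cong: if_cong)
  then show ?thesis unfolding gen_ideal_def by (metis (mono_tags) mem_Collect_eq)
qed

lemma gen_ideal_mult: "x \<in> gen_ideal gs \<Longrightarrow> c * x \<in> gen_ideal gs"
  unfolding gen_ideal_def by (auto simp: sum_distrib_left mult.assoc intro: exI[of _ "\<lambda>i. c * _ i"])

lemma gen_ideal_unit_cancel:
  assumes "u dvd 1" and "u * x \<in> gen_ideal gs"
  shows "x \<in> gen_ideal gs"
proof -
  obtain v where "1 = u * v" using assms(1) by (rule dvdE)
  then have "x = v * (u * x)" by (metis mult.left_commute mult.right_neutral)
  then show ?thesis by (metis gen_ideal_mult assms(2))
qed

lemma gen_ideal_vanishing_hom:
  fixes h :: "'a::comm_ring_1 \<Rightarrow> 'b::comm_ring_1"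
  assumes add: "\<And>a b. h (a + b) = h a + h b" and mult: "\<And>a b. h (a * b) = h a * h b"
    and vanish: "\<And>g. g \<in> set gs \<Longrightarrow> h g = 0"
    and x: "x \<in> gen_ideal gs"
  shows "h x = 0"
proof -
  obtain c where c: "x = (\<Sum>i<length gs. c i * gs ! i)" using x by (auto simp: gen_ideal_def)
  have zero: "h 0 = 0" using add[of 0 0] by simp
  have "h (\<Sum>i\<in>A. c i * gs ! i) = 0" if "A \<subseteq> {..<length gs}" for A
    using that
  proof (induction A rule: infinite_finite_induct)
    case (insert i A)
    then show ?case by (simp add: add mult vanish)
  qed (simp_all add: zero)
  then show ?thesis by (simp add: c)
qed

lemma fps_one_minus_X_dvd_one: "(1 - fps_X :: 'a::comm_ring_1 fps) dvd 1"
proof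
  show "1 = (1 - fps_X) * fps_left_inverse (1 - fps_X :: 'a fps) 1"
    using fps_left_inverse[of 1 "1 - fps_X :: 'a fps"] by (simp add: mult.commute)
qed

lemma e1T_nonzero: "e1T \<noteq> 0"
proof
  assume "e1T = 0"
  then have "Poly_Mapping.lookup e1T (1, 0, 0) = 0" by simp
  then show False by (simp add: e1T_def T1_def T2_def T3_def lookup_add lookup_single)
qed

text \<open>The nested evaluations substitute, from the outermost variable inwards, q2 = 1, q1 = 0
  and Y2 = E2 = E1 = Y1 = X1 = 0.\<close>
definition eval_q2_one :: "Sq \<Rightarrow> KT" where
  "eval_q2_one p = poly (poly (poly (poly (poly (poly (poly p 1) 0) 0) 0) 0) 0) 0"

lemma eval_q2_one_add: "eval_q2_one (a + b) = eval_q2_one a + eval_q2_one b"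
  and eval_q2_one_mult: "eval_q2_one (a * b) = eval_q2_one a * eval_q2_one b"
  by (simp_all add: eval_q2_one_def)

lemma eval_q2_one_gens: "g \<in> set gens \<Longrightarrow> eval_q2_one g = 0"
  by (auto simp: gens_def eval_q2_one_def StoSq_def KtoS_def X1_def Y1_def E1_def E2_def Y2_def
      q1_def q2_def)

lemma eval_q2_one_e1_diff: "eval_q2_one (StoSq (E1 + Y2 - KtoS e1T)) = - e1T"
  by (simp add: eval_q2_one_def StoSq_def KtoS_def E1_def Y2_def)

lemma Phi_smult: "Phi (smult c p) = fps_const (fps_of_poly c) * Phi p"
  by (simp add: Phi_def map_poly_smult fps_of_poly_smult fps_of_poly_mult)

lemma Phi_one_minus_q2: "Phi (1 - q2) = 1 - fps_X"
proof -
  have "(1::Sq) - q2 = [:1, -1:]" by (simp add: q2_def one_pCons)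
  then show ?thesis
    by (simp add: Phi_def map_poly_pCons fps_of_poly_pCons fps_of_poly_uminus)
qed

lemma Phi_StoSq: "Phi (StoSq s) = fps_const (fps_const s)"
  by (simp add: Phi_def StoSq_def map_poly_pCons fps_of_poly_const)

lemma Phi_one_minus_q2_mult: "Phi ((1 - q2) * StoSq s) = (1 - fps_X) * Phi (StoSq s)"
proof -
  have "(1 - q2) * StoSq s = smult [:s:] (1 - q2)" by (simp add: StoSq_def)
  then show ?thesis
    by (simp add: Phi_smult Phi_one_minus_q2 Phi_StoSq fps_of_poly_const mult.commute)
qed

theorem mainTheorem11:
  shows "StoSq (E1 + Y2 - KtoS e1T) \<notin> gen_ideal gens
       \<and> Phi (StoSq (E1 + Y2 - KtoS e1T)) \<in> gen_ideal (map Phi gens)"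
proof
  let ?f = "StoSq (E1 + Y2 - KtoS e1T)"
  show "?f \<notin> gen_ideal gens"
  proof
    assume "?f \<in> gen_ideal gens"
    then have "eval_q2_one ?f = 0"
      using gen_ideal_vanishing_hom[of eval_q2_one gens] eval_q2_one_add eval_q2_one_mult eval_q2_one_gens
      by blast
    then show False using eval_q2_one_e1_diff e1T_nonzero by simp
  qed
  have "(1 - q2) * ?f \<in> set gens" by (simp add: gens_def)
  then have "Phi ((1 - q2) * ?f) \<in> gen_ideal (map Phi gens)" by (simp add: gen_ideal_member)
  then show "Phi ?f \<in> gen_ideal (map Phi gens)"
    unfolding Phi_one_minus_q2_mult by (rule gen_ideal_unit_cancel[OF fps_one_minus_X_dvd_one])
qed

end
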